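(* Let $T^4=\mathbb{R}^4/\mathbb{Z}^{4}$, and let $G$ be a constant Riemannian metric and $B$ a constant real $2$-form on $T^4$ whose components $G_{IJ}$, $B_{IJ}$ in the standard coordinates are all rational numbers (i.e. the $\mathcal N=(1,1)$ SCFT with data $(T^4;G,B)$ is rational). Then there exists a constant complex structure $I$ on $T^4$ such that: $G$ is compatible with $I$; the complex torus $(T^4,I)$ is polarizable; and the cohomology class of $B$ has only a Hodge $(1,1)$ component with respect to $I$. In particular, $B$ lies in the algebraic part $H^2(T^4;\mathbb{Q})\cap H^{1,1}((T^4,I);\mathbb{R})$.
   Context: $T^4=\mathbb{R}^4/\mathbb{Z}^4$ with coordinates $X^1,\dots,X^4$, units normalized so that the lattice is $H_1(T^4;\mathbb{Z})=\mathbb{Z}^4$ and $2\pi\sqrt{\alpha'}=1$. $G=G_{IJ}dX^I\otimes dX^J$ with constant $G_{IJ}$, $B=\frac12 B_{IJ}dX^I\wedge dX^J$ with constant $B_{IJ}$. By the known classification, the $\mathcal N=(1,1)$ SCFT (nonlinear sigma model) for $(T^4;G,B)$ is rational iff all $G_{IJ},B_{IJ}\in\mathbb{Q}$. A constant complex structure $I$ ($I^2=-1$ on $\mathbb{R}^4$) is compatible with $G$ if $G(Iu,Iv)=G(u,v)$. The complex torus $(T^4,I)$ is polarizable if there is a class $\psi\in H^2(T^4;\mathbb{Z})\cap H^{1,1}$ such that $(u,v)\mapsto\psi(Iu,v)$ is positive definite on $H_1(T^4;\mathbb{R})$. Hodge types of classes in $H^2(T^4;\mathbb{C})$ are taken with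 respect to $I$. *)

theory Defs
  imports "HOL-Analysis.Analysis"
begin

text \<open>Constant tensors on T^4 = R^4/Z^4 are 4x4 real matrices of components in the
standard coordinates X^1..X^4; vectors of real^4 are elements of H_1(T^4;R) = R^4
(tangent vectors), the lattice H_1(T^4;Z) being Z^4.\<close>

type_synonym mat4 = "real^4^4"

definition bil :: "mat4 \<Rightarrow> real^4 \<Rightarrow> real^4 \<Rightarrow> real" where
  "bil M u v = (\<Sum>i\<in>UNIV. \<Sum>j\<in>UNIV. M$i$j * u$i * v$j)"

definition rational_matrix :: "mat4 \<Rightarrow> bool" where
  "rational_matrix M \<longleftrightarrow> (\<forall>i j. M$i$j \<in> \<rat>)"

definition integral_matrix :: "mat4 \<Rightarrow> bool" where
  "integral_matrix M \<longleftrightarrow> (\<forall>i j. M$i$j \<in> \<int>)"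

definition riemannian_metric :: "mat4 \<Rightarrow> bool" where
  "riemannian_metric G \<longleftrightarrow> transpose G = G \<and> (\<forall>u. u \<noteq> 0 \<longrightarrow> bil G u u > 0)"

text \<open>Constant real 2-form B = 1/2 B_{IJ} dX^I wedge dX^J: antisymmetric B_{IJ};
as a bilinear form B(u,v) = sum B_{IJ} u^I v^J.\<close>
definition two_form :: "mat4 \<Rightarrow> bool" where
  "two_form B \<longleftrightarrow> transpose B = - B"

definition complex_structure :: "mat4 \<Rightarrow> bool" where
  "complex_structure I \<longleftrightarrow> I ** I = - mat 1"

definition compatible :: "mat4 \<Rightarrow> mat4 \<Rightarrow> bool" where
  "compatible G I \<longleftrightarrow> (\<forall>u v. bil G (I *v u) (I *v v) = bil G u v)"

text \<open>A real (constant) 2-form is purely of Hodge type (1,1) w.r.t. I iff it is I-invariant.\<close>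
definition hodge_11 :: "mat4 \<Rightarrow> mat4 \<Rightarrow> bool" where
  "hodge_11 I w \<longleftrightarrow> (\<forall>u v. bil w (I *v u) (I *v v) = bil w u v)"

text \<open>H^2(T^4;Z) = integral constant 2-forms (values on lattice 2-cycles are integers).\<close>
definition polarizable :: "mat4 \<Rightarrow> bool" where
  "polarizable I \<longleftrightarrow> (\<exists>\<psi>. two_form \<psi> \<and> integral_matrix \<psi> \<and> hodge_11 I \<psi> \<and>
      (\<forall>u. u \<noteq> 0 \<longrightarrow> bil \<psi> (I *v u) u > 0))"

end

theory Submission
  imports Defs
begin

text \<open>
  Write \<open>B = G K\<close> with \<open>K = G\<^sup>-\<^sup>1 B\<close>, and let \<open>L = (\<star>\<^sub>0 B) G\<close>, where \<open>\<star>\<^sub>0\<close> is the Hodge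
  star of the flat metric. Up to the factor \<open>\<surd>(det G)\<close>, \<open>L\<close> is \<open>G\<^sup>-\<^sup>1\<close> applied to the
  \<open>G\<close>-Hodge dual of \<open>B\<close>, so for \<open>\<delta> = \<plusminus>\<surd>(det G)\<close> the endomorphisms \<open>J\<^sub>\<delta> = K + L/\<delta>\<close>
  belong to the self-dual and the anti-self-dual part of \<open>B\<close>. Both are \<open>G\<close>-skew, commute with
  \<open>K\<close> and \<open>L\<close>, and (this is special to dimension four) square to scalars. As \<open>B \<noteq> 0\<close>,
  one of these scalars is negative, say \<open>-a\<close>, and \<open>I = J\<^sub>\<delta>/\<surd>a\<close> is a \<open>G\<close>-compatible complex
  structure commuting with \<open>K\<close>; hence \<open>B = G K\<close> is \<open>I\<close>-invariant, i.e. of type (1,1).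
  \<open>I\<close> need not be rational, but \<open>G (K + r L) = B + r G (\<star>\<^sub>0 B) G\<close> is rational for rational
  \<open>r\<close>, \<open>I\<close>-invariant, and positive on \<open>(I u, u)\<close> once \<open>r\<close> is close enough to \<open>1/\<delta>\<close> on the side
  of \<open>\<delta>\<close>; clearing its denominators gives the polarization. For \<open>B = 0\<close> any nonzero rational
  two-form can take the place of \<open>B\<close>.
\<close>

section \<open>Skew endomorphisms of a positive definite form\<close>

lemma matrix_add_rdistrib: "(A + B) ** C = A ** C + B ** C"
  for A B :: "'a::semiring_1^'n^'m" and C :: "'a^'p^'n"
  by (simp add: matrix_matrix_mult_def vec_eq_iff sum.distrib distrib_right)

lemma matrix_neg_left: "(- A) ** B = - (A ** B)"
  for A :: "'a::ring_1^'n^'m" and B :: "'a^'p^'n"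
  by (simp add: matrix_matrix_mult_def vec_eq_iff sum_negf)

lemma matrix_neg_right: "A ** (- B) = - (A ** B)"
  for A :: "'a::ring_1^'n^'m" and B :: "'a^'p^'n"
  by (simp add: matrix_matrix_mult_def vec_eq_iff sum_negf)

lemma matrix_scaleR_left: "(k *\<^sub>R A) ** B = k *\<^sub>R (A ** B)"
  for A :: "real^'n^'m"
  by (simp add: scalar_matrix_assoc)

lemma matrix_scaleR_right: "A ** (k *\<^sub>R B) = k *\<^sub>R (A ** B)"
  for A :: "real^'n^'m"
  by (simp add: matrix_scalar_ac scalar_matrix_assoc)

lemma transpose_add: "transpose (A + B) = transpose A + transpose B"
  by (simp add: transpose_def vec_eq_iff)

lemma matrix_vector_mult_neg: "(- A) *v x = - (A *v x)"
  for A :: "'a::ring_1^'n^'m"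
  by (simp add: matrix_vector_mult_def vec_eq_iff sum_negf)

lemma inner_matrix_vector_left: "(A *v x) \<bullet> y = x \<bullet> (transpose A *v y)"
  for A :: "real^'n^'m"
  by (metis dot_lmul_matrix vector_transpose_matrix)

lemma inner_skew_mult:
  fixes G J M :: "real^'n^'n"
  assumes "transpose J ** G = - (G ** J)"
  shows "(J *v u) \<bullet> (G *v (M *v u)) = - (u \<bullet> ((G ** (J ** M)) *v u))"
proof -
  have "(J *v u) \<bullet> (G *v (M *v u)) = u \<bullet> ((transpose J ** G ** M) *v u)"
    by (simp add: inner_matrix_vector_left matrix_vector_mul_assoc matrix_mul_assoc)
  also have "\<dots> = - (u \<bullet> ((G ** (J ** M)) *v u))"
    by (simp add: assms matrix_neg_left matrix_vector_mult_neg matrix_mul_assoc)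
  finally show ?thesis .
qed

lemma skew_square_nonneg_imp_zero:
  fixes G J :: "real^'n^'n"
  assumes pos: "\<And>x. x \<noteq> 0 \<Longrightarrow> 0 < x \<bullet> (G *v x)"
    and skew: "transpose J ** G = - (G ** J)" and square: "J ** J = c *\<^sub>R mat 1" and "0 \<le> c"
  shows "J = 0"
proof -
  have "J *v u = 0" for u
  proof (rule ccontr)
    assume "J *v u \<noteq> 0"
    then have "0 < (J *v u) \<bullet> (G *v (J *v u))" by (rule pos)
    also have "\<dots> = - c * (u \<bullet> (G *v u))"
      by (simp add: inner_skew_mult[OF skew] square matrix_scaleR_right scaleR_matrix_vector_assoc[symmetric])
    also have "\<dots> \<le> 0"
      using \<open>0 \<le> c\<close> pos[of u] by (cases "u = 0") auto
    finally show False by simp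
  qed
  then show ?thesis by (simp add: matrix_eq)
qed

lemma skew_complex_structure_congruence:
  fixes G I M :: "real^'n^'n"
  assumes skew: "transpose I ** G = - (G ** I)" and square: "I ** I = - mat 1"
    and commute: "M ** I = I ** M"
  shows "transpose I ** (G ** M) ** I = G ** M"
proof -
  have "transpose I ** (G ** M) ** I = (transpose I ** G) ** (M ** I)"
    by (simp add: matrix_mul_assoc)
  also have "\<dots> = - (G ** ((I ** I) ** M))"
    by (simp add: skew commute matrix_neg_left matrix_mul_assoc)
  also have "\<dots> = G ** M"
    by (simp add: square matrix_neg_left matrix_neg_right)
  finally show ?thesis .
qed

lemma pos_def_det_pos:
  fixes G :: "real^'n^'n"
  assumes pos: "\<And>x. x \<noteq> 0 \<Longrightarrow> 0 < x \<bullet> (G *v x)"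
  shows "0 < det G"
proof (rule ccontr)
  define H where "H t = (1 - t) *\<^sub>R mat 1 + t *\<^sub>R G" for t :: real
  have H_nonsingular: "det (H t) \<noteq> 0" if "0 \<le> t" "t \<le> 1" for t
  proof -
    have "x = 0" if "H t *v x = 0" for x
    proof (rule ccontr)
      assume "x \<noteq> 0"
      then have "0 < (1 - t) * (x \<bullet> x) + t * (x \<bullet> (G *v x))"
        using \<open>0 \<le> t\<close> \<open>t \<le> 1\<close> pos[of x]
        by (cases "t = 0") (auto intro: add_nonneg_pos)
      also have "\<dots> = x \<bullet> (H t *v x)"
        by (simp add: H_def matrix_vector_mult_add_rdistrib scaleR_matrix_vector_assoc[symmetric] inner_add_right)
      finally show False using that by simp
    qed
    then have "invertible (H t)"
      by (simp add: invertible_left_inverse matrix_left_invertible_ker)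
    then show ?thesis by (simp add: invertible_det_nz)
  qed
  assume "\<not> 0 < det G"
  moreover have "det (H 0) = 1" "H 1 = G" by (simp_all add: H_def)
  moreover have "continuous_on {0..1} (\<lambda>t. det (H t))"
    unfolding H_def det_def by (intro continuous_intros)
  ultimately obtain t where "0 \<le> t" "t \<le> 1" "det (H t) = 0"
    using IVT2'[of "\<lambda>t. det (H t)" 1 0 0] by auto
  with H_nonsingular show False by blast
qed

lemma rational_approx_on_side:
  fixes x \<delta> \<eta> :: real
  assumes "\<delta> \<noteq> 0" "0 < \<eta>"
  obtains r where "r \<in> \<rat>" "0 \<le> (r - x) * \<delta>" "\<bar>r - x\<bar> < \<eta>"
proof (cases "0 < \<delta>")
  case True
  obtain r where "r \<in> \<rat>" "x < r" "r < x + \<eta>"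
    using Rats_dense_in_real[of x "x + \<eta>"] assms by auto
  with True show ?thesis by (intro that[of r]) auto
next
  case False
  obtain r where "r \<in> \<rat>" "x - \<eta> < r" "r < x"
    using Rats_dense_in_real[of "x - \<eta>" x] assms by auto
  with False show ?thesis by (intro that[of r]) (auto intro: mult_nonpos_nonpos)
qed

section \<open>Commuting skew pairs\<close>

locale commuting_skew_pair =
  fixes G K L :: "real^'n^'n" and d p s :: real
  assumes G_pos: "\<And>x. x \<noteq> 0 \<Longrightarrow> 0 < x \<bullet> (G *v x)"
    and K_skew: "transpose K ** G = - (G ** K)"
    and L_skew: "transpose L ** G = - (G ** L)"
    and KL: "K ** L = p *\<^sub>R mat 1" and LK: "L ** K = p *\<^sub>R mat 1"
    and sum_squares: "d *\<^sub>R (K ** K) + L ** L = s *\<^sub>R mat 1"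
    and d_pos: "0 < d"
begin

lemma G_nonneg: "0 \<le> x \<bullet> (G *v x)"
  using G_pos[of x] by (cases "x = 0") auto

definition J :: "real \<Rightarrow> real^'n^'n" where
  "J \<delta> = K + (1 / \<delta>) *\<^sub>R L"

lemma J_skew: "transpose (J \<delta>) ** G = - (G ** J \<delta>)"
  by (simp add: J_def transpose_add transpose_scalar matrix_add_rdistrib matrix_add_ldistrib
      matrix_scaleR_left matrix_scaleR_right K_skew L_skew)

lemma J_commute: "K ** J \<delta> = J \<delta> ** K" "L ** J \<delta> = J \<delta> ** L"
  by (simp_all add: J_def matrix_add_rdistrib matrix_add_ldistrib matrix_scaleR_right
      matrix_scaleR_left KL LK)

lemma J_square:
  assumes "\<delta> * \<delta> = d"
  shows "J \<delta> ** J \<delta> = (s / d + 2 * p / \<delta>) *\<^sub>R mat 1"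
proof -
  have "K ** L + L ** K = (2 * p) *\<^sub>R mat 1"
    by (simp add: KL LK flip: scaleR_add_left)
  moreover have "J \<delta> ** J \<delta> = K ** K + (1 / \<delta>) *\<^sub>R (K ** L + L ** K) + (1 / d) *\<^sub>R (L ** L)"
    by (simp add: J_def matrix_add_rdistrib matrix_add_ldistrib matrix_scaleR_right
        matrix_scaleR_left scaleR_add_right assms[symmetric])
  moreover have "K ** K + (1 / d) *\<^sub>R (L ** L) = (s / d) *\<^sub>R mat 1"
    using arg_cong[OF sum_squares, of "scaleR (1 / d)"] d_pos by (simp add: scaleR_add_right)
  ultimately show ?thesis
    by (simp add: algebra_simps)
qed

lemma exists_negative_J_square:
  assumes "K \<noteq> 0"
  obtains \<delta> where "\<delta> * \<delta> = d" "s / d + 2 * p / \<delta> < 0"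
proof -
  define \<delta> where "\<delta> = sqrt d"
  have roots: "\<delta> * \<delta> = d" "(- \<delta>) * (- \<delta>) = d"
    using d_pos by (simp_all add: \<delta>_def)
  have "s / d + 2 * p / \<delta> < 0 \<or> s / d + 2 * p / (- \<delta>) < 0"
  proof (rule ccontr)
    assume "\<not> ?thesis"
    then have "J \<delta> = 0" "J (- \<delta>) = 0"
      using skew_square_nonneg_imp_zero[OF G_pos J_skew J_square] roots by auto
    moreover have "J \<delta> + J (- \<delta>) = 2 *\<^sub>R K"
      by (simp add: J_def scaleR_2)
    ultimately show False
      using assms by simp
  qed
  with roots that show ?thesis by blast
qed

lemma J_polarization_pos:
  assumes root: "\<delta> * \<delta> = d" and a: "s / d + 2 * p / \<delta> = - a" "0 < a"
    and \<epsilon>: "0 \<le> \<epsilon> * \<delta>" "\<epsilon> * p < a" and "u \<noteq> 0"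
  shows "0 < (J \<delta> *v u) \<bullet> (G *v ((K + (1 / \<delta> + \<epsilon>) *\<^sub>R L) *v u))"
proof -
  have "\<delta> \<noteq> 0" using root d_pos by auto
  have M: "K + (1 / \<delta> + \<epsilon>) *\<^sub>R L = J \<delta> + \<epsilon> *\<^sub>R L"
    by (simp add: J_def algebra_simps)
  have JM: "J \<delta> ** (J \<delta> + \<epsilon> *\<^sub>R L) = (\<epsilon> * p - a) *\<^sub>R mat 1 + (\<epsilon> / \<delta>) *\<^sub>R (L ** L)"
  proof -
    have "J \<delta> ** J \<delta> = (- a) *\<^sub>R mat 1"
      using J_square[OF root] a by simp
    moreover have "J \<delta> ** L = p *\<^sub>R mat 1 + (1 / \<delta>) *\<^sub>R (L ** L)"
      by (simp add: J_def matrix_add_rdistrib matrix_scaleR_left KL)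
    ultimately show ?thesis
      by (simp add: matrix_add_ldistrib matrix_scaleR_right algebra_simps)
  qed
  have "(J \<delta> *v u) \<bullet> (G *v ((K + (1 / \<delta> + \<epsilon>) *\<^sub>R L) *v u))
      = - (u \<bullet> ((G ** ((\<epsilon> * p - a) *\<^sub>R mat 1 + (\<epsilon> / \<delta>) *\<^sub>R (L ** L))) *v u))"
    unfolding M inner_skew_mult[OF J_skew] JM ..
  also have "\<dots> = (a - \<epsilon> * p) * (u \<bullet> (G *v u)) - (\<epsilon> / \<delta>) * (u \<bullet> ((G ** (L ** L)) *v u))"
    by (simp add: matrix_add_ldistrib matrix_scaleR_right matrix_vector_mult_add_rdistrib
        scaleR_matrix_vector_assoc[symmetric] inner_add_right) (simp add: algebra_simps)
  also have "\<dots> = (a - \<epsilon> * p) * (u \<bullet> (G *v u)) + (\<epsilon> / \<delta>) * ((L *v u) \<bullet> (G *v (L *v u)))"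
    by (simp add: inner_skew_mult[OF L_skew])
  also have "\<dots> > 0"
  proof -
    have "0 \<le> \<epsilon> / \<delta>"
      using \<epsilon>(1) \<open>\<delta> \<noteq> 0\<close> by (simp add: zero_le_divide_iff zero_le_mult_iff)
    then have "0 \<le> (\<epsilon> / \<delta>) * ((L *v u) \<bullet> (G *v (L *v u)))"
      using G_nonneg by (rule mult_nonneg_nonneg)
    moreover have "0 < (a - \<epsilon> * p) * (u \<bullet> (G *v u))"
      using \<epsilon>(2) G_pos[OF \<open>u \<noteq> 0\<close>] by simp
    ultimately show ?thesis by linarith
  qed
  finally show ?thesis .
qed

lemma polarized_complex_structure:
  assumes "K \<noteq> 0"
  obtains r I where "r \<in> \<rat>" "I ** I = - mat 1" "transpose I ** G = - (G ** I)"
    "K ** I = I ** K" "L ** I = I ** L"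
    "\<And>u. u \<noteq> 0 \<Longrightarrow> 0 < (I *v u) \<bullet> (G *v ((K + r *\<^sub>R L) *v u))"
proof -
  obtain \<delta> where root: "\<delta> * \<delta> = d" and "s / d + 2 * p / \<delta> < 0"
    using exists_negative_J_square[OF assms] .
  then obtain a where a: "s / d + 2 * p / \<delta> = - a" "0 < a"
    by (metis neg_0_less_iff_less minus_minus)
  have "\<delta> \<noteq> 0" using root d_pos by auto
  obtain r where r: "r \<in> \<rat>" and side: "0 \<le> (r - 1 / \<delta>) * \<delta>"
    and close: "\<bar>r - 1 / \<delta>\<bar> < a / (\<bar>p\<bar> + 1)"
    using rational_approx_on_side[OF \<open>\<delta> \<noteq> 0\<close>, of "a / (\<bar>p\<bar> + 1)" "1 / \<delta>"] a by auto
  have small: "(r - 1 / \<delta>) * p < a"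
  proof -
    have "(r - 1 / \<delta>) * p \<le> \<bar>r - 1 / \<delta>\<bar> * \<bar>p\<bar>"
      by (metis abs_ge_self abs_mult)
    also have "\<dots> \<le> a / (\<bar>p\<bar> + 1) * \<bar>p\<bar>"
      using close by (intro mult_right_mono) auto
    also have "\<dots> < a"
      using a by (simp add: field_simps)
    finally show ?thesis .
  qed
  define I where "I = (1 / sqrt a) *\<^sub>R J \<delta>"
  have "I ** I = - mat 1"
    using a by (simp add: I_def matrix_scaleR_left matrix_scaleR_right J_square[OF root])
  moreover have "transpose I ** G = - (G ** I)"
    by (simp add: I_def transpose_scalar matrix_scaleR_left matrix_scaleR_right J_skew)
  moreover have "K ** I = I ** K" "L ** I = I ** L"
    by (simp_all add: I_def matrix_scaleR_left matrix_scaleR_right J_commute)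
  moreover have "0 < (I *v u) \<bullet> (G *v ((K + r *\<^sub>R L) *v u))" if "u \<noteq> 0" for u
    using J_polarization_pos[OF root a side small that] a
    by (simp add: I_def scaleR_matrix_vector_assoc[symmetric])
  ultimately show thesis
    using that r by blast
qed

end

section \<open>Two-forms on \<open>\<real>\<^sup>4\<close>\<close>

lemma vector_4 [simp]:
  "(vector [x, y, z, w] :: 'a::zero^4) $ 1 = x" "(vector [x, y, z, w] :: 'a::zero^4) $ 2 = y"
  "(vector [x, y, z, w] :: 'a::zero^4) $ 3 = z" "(vector [x, y, z, w] :: 'a::zero^4) $ 4 = w"
  by (simp_all add: vector_def)

lemma det_4:
  "det (A::'a::comm_ring_1^4^4) =
      A$1$1 * A$2$2 * A$3$3 * A$4$4 - A$1$1 * A$2$2 * A$3$4 * A$4$3 - A$1$1 * A$2$3 * A$3$2 * A$4$4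
    + A$1$1 * A$2$3 * A$3$4 * A$4$2 + A$1$1 * A$2$4 * A$3$2 * A$4$3 - A$1$1 * A$2$4 * A$3$3 * A$4$2
    - A$1$2 * A$2$1 * A$3$3 * A$4$4 + A$1$2 * A$2$1 * A$3$4 * A$4$3 + A$1$2 * A$2$3 * A$3$1 * A$4$4
    - A$1$2 * A$2$3 * A$3$4 * A$4$1 - A$1$2 * A$2$4 * A$3$1 * A$4$3 + A$1$2 * A$2$4 * A$3$3 * A$4$1
    + A$1$3 * A$2$1 * A$3$2 * A$4$4 - A$1$3 * A$2$1 * A$3$4 * A$4$2 - A$1$3 * A$2$2 * A$3$1 * A$4$4
    + A$1$3 * A$2$2 * A$3$4 * A$4$1 + A$1$3 * A$2$4 * A$3$1 * A$4$2 - A$1$3 * A$2$4 * A$3$2 * A$4$1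
    - A$1$4 * A$2$1 * A$3$2 * A$4$3 + A$1$4 * A$2$1 * A$3$3 * A$4$2 + A$1$4 * A$2$2 * A$3$1 * A$4$3
    - A$1$4 * A$2$2 * A$3$3 * A$4$1 - A$1$4 * A$2$3 * A$3$1 * A$4$2 + A$1$4 * A$2$3 * A$3$2 * A$4$1"
proof -
  have f1: "finite {2::4, 3, 4}" "1 \<notin> {2::4, 3, 4}" by auto
  have f2: "finite {3::4, 4}" "2 \<notin> {3::4, 4}" by auto
  have f3: "finite {4::4}" "3 \<notin> {4::4}" by auto
  show ?thesis
    unfolding det_def UNIV_4
    unfolding sum_over_permutations_insert[OF f1] sum_over_permutations_insert[OF f2]
      sum_over_permutations_insert[OF f3] permutes_sing
    by (simp add: sign_swap_id permutation_swap_id permutation_compose sign_compose algebra_simps)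
qed

definition skew4 :: "real \<Rightarrow> real \<Rightarrow> real \<Rightarrow> real \<Rightarrow> real \<Rightarrow> real \<Rightarrow> mat4" where
  "skew4 a12 a13 a14 a23 a24 a34 =
     vector [vector [0, a12, a13, a14], vector [- a12, 0, a23, a24],
             vector [- a13, - a23, 0, a34], vector [- a14, - a24, - a34, 0]]"

text \<open>\<open>(star4 A)\<^sub>i\<^sub>j = 1/2 \<epsilon>\<^sub>i\<^sub>j\<^sub>k\<^sub>l A\<^sub>k\<^sub>l\<close> for antisymmetric \<open>A\<close>: the Hodge star \<open>\<star>\<^sub>0\<close> of the
  flat metric.\<close>
definition star4 :: "mat4 \<Rightarrow> mat4" where
  "star4 A = skew4 (A$3$4) (A$4$2) (A$2$3) (A$1$4) (A$3$1) (A$1$2)"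

text \<open>\<open>A \<and> B = wedge4 A B \<cdot> dX\<^sup>1 \<and> dX\<^sup>2 \<and> dX\<^sup>3 \<and> dX\<^sup>4\<close>; \<open>wedge4 A A\<close> is the Pfaffian of \<open>A\<close>.\<close>
definition wedge4 :: "mat4 \<Rightarrow> mat4 \<Rightarrow> real" where
  "wedge4 A B = (A$1$2 * B$3$4 + A$3$4 * B$1$2 + A$1$4 * B$2$3 + A$2$3 * B$1$4
     - A$1$3 * B$2$4 - A$2$4 * B$1$3) / 2"

lemma two_form_skew4: "two_form (skew4 a12 a13 a14 a23 a24 a34)"
  by (simp add: two_form_def skew4_def transpose_def vec_eq_iff forall_4)

lemma two_form_star4: "two_form (star4 A)"
  by (simp add: star4_def two_form_skew4)

lemma two_form_skew4E:
  assumes "two_form A"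
  obtains a12 a13 a14 a23 a24 a34 where "A = skew4 a12 a13 a14 a23 a24 a34"
proof
  have antisym: "A$j$i = - A$i$j" for i j
    using arg_cong[OF assms[unfolded two_form_def], of "\<lambda>M. M$j$i"] by (simp add: transpose_def)
  have "A$i$i = 0" for i
    using antisym[of i i] by simp
  then show "A = skew4 (A$1$2) (A$1$3) (A$1$4) (A$2$3) (A$2$4) (A$3$4)"
    by (simp add: skew4_def vec_eq_iff forall_4 antisym[of 1 2] antisym[of 1 3] antisym[of 1 4]
        antisym[of 2 3] antisym[of 2 4] antisym[of 3 4])
qed

lemma star4_star4: "two_form A \<Longrightarrow> star4 (star4 A) = A"
  by (elim two_form_skew4E, hypsubst_thin) (simp add: star4_def skew4_def)

lemma mult_star4_self: "two_form A \<Longrightarrow> A ** star4 A = (- wedge4 A A) *\<^sub>R mat 1"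
  by (elim two_form_skew4E, hypsubst_thin)
    (simp add: vec_eq_iff forall_4 sum_4 matrix_matrix_mult_def star4_def skew4_def wedge4_def
       mat_def; algebra)

lemma star4_mult_self: "two_form A \<Longrightarrow> star4 A ** A = (- wedge4 A A) *\<^sub>R mat 1"
  by (elim two_form_skew4E, hypsubst_thin)
    (simp add: vec_eq_iff forall_4 sum_4 matrix_matrix_mult_def star4_def skew4_def wedge4_def
       mat_def; algebra)

lemma star4_mult_polarization:
  assumes "two_form A" "two_form B"
  shows "star4 A ** B + star4 B ** A = (- 2 * wedge4 A B) *\<^sub>R mat 1"
  using assms by (elim two_form_skew4E, hypsubst_thin)
    (simp add: vec_eq_iff forall_4 sum_4 matrix_matrix_mult_def star4_def skew4_def wedge4_def
       mat_def; algebra)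

text \<open>This is \<open>\<epsilon>\<^sub>i\<^sub>j\<^sub>k\<^sub>l X\<^sub>a\<^sub>i X\<^sub>b\<^sub>j X\<^sub>p\<^sub>k X\<^sub>q\<^sub>l = det X \<epsilon>\<^sub>a\<^sub>b\<^sub>p\<^sub>q\<close>; for \<open>X = G\<close> it relates \<open>\<star>\<^sub>0\<close> to
  the Hodge star of \<open>G\<close>.\<close>
lemma star4_congruence:
  "two_form A \<Longrightarrow> X ** star4 (transpose X ** A ** X) ** transpose X = det X *\<^sub>R star4 A"
  unfolding det_4 by (elim two_form_skew4E, hypsubst_thin)
    (simp add: vec_eq_iff forall_4 sum_4 matrix_matrix_mult_def star4_def skew4_def
       Finite_Cartesian_Product.transpose_def; algebra)

section \<open>Rational forms and polarizations\<close>

lemma rational_matrix_add: "rational_matrix A \<Longrightarrow> rational_matrix B \<Longrightarrow> rational_matrix (A + B)"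
  by (simp add: rational_matrix_def)

lemma rational_matrix_mult: "rational_matrix A \<Longrightarrow> rational_matrix B \<Longrightarrow> rational_matrix (A ** B)"
  by (simp add: rational_matrix_def matrix_matrix_mult_def Rats_sum)

lemma rational_matrix_scaleR: "r \<in> \<rat> \<Longrightarrow> rational_matrix A \<Longrightarrow> rational_matrix (r *\<^sub>R A)"
  by (simp add: rational_matrix_def)

lemma rational_matrix_star4: "rational_matrix A \<Longrightarrow> rational_matrix (star4 A)"
  by (simp add: rational_matrix_def star4_def skew4_def forall_4)

lemma rational_matrix_clear_denominators:
  assumes "rational_matrix M"
  obtains N :: nat where "0 < N" "integral_matrix (real N *\<^sub>R M)"
proof -
  have "\<exists>n::nat. 0 < n \<and> real n * M$i$j \<in> \<int>" for i j
  proof -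
    obtain a b where "0 < b" "M$i$j = of_int a / of_int b"
      using assms Rats_cases' unfolding rational_matrix_def by metis
    then show ?thesis
      by (intro exI[of _ "nat b"]) simp
  qed
  then obtain n where n: "\<And>i j. 0 < n i j \<and> real (n i j) * M$i$j \<in> \<int>"
    by metis
  define N where "N = (\<Prod>(i, j)\<in>UNIV. n i j)"
  have "real N * M$i$j \<in> \<int>" for i j
  proof -
    have "N = n i j * (\<Prod>(k, l)\<in>UNIV - {(i, j)}. n k l)"
      unfolding N_def by (subst prod.remove[of _ "(i, j)"]) auto
    then have "real N * M$i$j = real (\<Prod>(k, l)\<in>UNIV - {(i, j)}. n k l) * (real (n i j) * M$i$j)"
      by simp
    also have "\<dots> \<in> \<int>"
      by (rule Ints_mult[OF Ints_of_nat n[THEN conjunct2]])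
    finally show ?thesis .
  qed
  moreover have "0 < N"
    unfolding N_def using n by (intro prod_pos) auto
  ultimately show thesis
    using that by (simp add: integral_matrix_def)
qed

lemma bil_eq_inner: "bil M u v = u \<bullet> (M *v v)"
  by (simp add: bil_def inner_vec_def matrix_vector_mult_def sum_distrib_left mult_ac)

lemma bil_congruence: "transpose X ** M ** X = M \<Longrightarrow> bil M (X *v u) (X *v v) = bil M u v"
  by (metis bil_eq_inner inner_matrix_vector_left matrix_vector_mul_assoc)

lemma polarizable_if_rational_form:
  assumes "two_form \<psi>" "rational_matrix \<psi>" "transpose I ** \<psi> ** I = \<psi>"
    and pos: "\<And>u. u \<noteq> 0 \<Longrightarrow> 0 < (I *v u) \<bullet> (\<psi> *v u)"
  shows "polarizable I"
proof -
  obtain N :: nat where "0 < N" "integral_matrix (real N *\<^sub>R \<psi>)"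
    using rational_matrix_clear_denominators[OF assms(2)] .
  moreover have "two_form (real N *\<^sub>R \<psi>)"
    using assms(1) by (simp add: two_form_def transpose_scalar)
  moreover have "hodge_11 I (real N *\<^sub>R \<psi>)"
    using assms(3) by (simp add: hodge_11_def bil_congruence matrix_scaleR_left matrix_scaleR_right)
  moreover have "0 < bil (real N *\<^sub>R \<psi>) (I *v u) u" if "u \<noteq> 0" for u
    using pos[OF that] \<open>0 < N\<close> by (simp add: bil_eq_inner scaleR_matrix_vector_assoc[symmetric])
  ultimately show ?thesis
    unfolding polarizable_def by blast
qed

lemma commuting_skew_pair_metric_form:
  fixes G Gi B :: mat4
  assumes G_sym: "transpose G = G" and G_pos: "\<And>x. x \<noteq> 0 \<Longrightarrow> 0 < x \<bullet> (G *v x)"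
    and B: "two_form B" and inverse: "Gi ** G = mat 1" "G ** Gi = mat 1"
  shows "commuting_skew_pair G (Gi ** B) (star4 B ** G) (det G) (- wedge4 B B)
    (- 2 * wedge4 (G ** star4 B ** G) B)"
proof
  define S where "S = star4 B"
  define T where "T = G ** S ** G"
  have B_antisym: "transpose B = - B" and S_antisym: "transpose S = - S"
    using B two_form_star4[of B] by (simp_all add: two_form_def S_def)
  have "transpose Gi ** G = mat 1"
    using arg_cong[OF inverse(2), of transpose] by (simp add: matrix_transpose_mul G_sym)
  then show "transpose (Gi ** B) ** G = - (G ** (Gi ** B))"
    by (simp add: matrix_transpose_mul B_antisym matrix_neg_left matrix_mul_assoc[symmetric]
        matrix_mul_assoc inverse(2))
  show "transpose (star4 B ** G) ** G = - (G ** (star4 B ** G))"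
    by (simp add: matrix_transpose_mul G_sym S_antisym[unfolded S_def] matrix_neg_left
        matrix_neg_right matrix_mul_assoc)
  have "Gi ** B ** (star4 B ** G) = Gi ** (B ** star4 B) ** G"
    by (simp add: matrix_mul_assoc)
  then show "Gi ** B ** (star4 B ** G) = (- wedge4 B B) *\<^sub>R mat 1"
    by (simp add: mult_star4_self[OF B] matrix_neg_left matrix_neg_right matrix_scaleR_left
        matrix_scaleR_right inverse(1))
  have "star4 B ** G ** (Gi ** B) = star4 B ** (G ** Gi) ** B"
    by (simp add: matrix_mul_assoc)
  then show "star4 B ** G ** (Gi ** B) = (- wedge4 B B) *\<^sub>R mat 1"
    by (simp add: star4_mult_self[OF B] inverse(2))
  have "G ** star4 T ** G = det G *\<^sub>R B"
    using star4_congruence[OF two_form_star4, of G B]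
    by (simp add: G_sym T_def S_def star4_star4[OF B])
  then have "det G *\<^sub>R (Gi ** B) = Gi ** (G ** star4 T ** G)"
    by (simp add: matrix_scaleR_right)
  also have "\<dots> = star4 T ** G"
    by (simp add: matrix_mul_assoc inverse(1))
  finally have dK: "det G *\<^sub>R (Gi ** B) = star4 T ** G" .
  have "det G *\<^sub>R (Gi ** B ** (Gi ** B)) = (det G *\<^sub>R (Gi ** B)) ** (Gi ** B)"
    by (simp add: matrix_scaleR_left)
  also have "\<dots> = star4 T ** (G ** Gi) ** B"
    by (simp add: dK matrix_mul_assoc)
  finally have "det G *\<^sub>R (Gi ** B ** (Gi ** B)) = star4 T ** B"
    by (simp add: inverse(2))
  moreover have "star4 B ** G ** (star4 B ** G) = star4 B ** T"
    by (simp add: T_def S_def matrix_mul_assoc)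
  moreover have "two_form T"
    by (simp add: two_form_def T_def matrix_transpose_mul G_sym S_antisym matrix_neg_left
        matrix_neg_right matrix_mul_assoc)
  ultimately show "det G *\<^sub>R (Gi ** B ** (Gi ** B)) + star4 B ** G ** (star4 B ** G)
      = (- 2 * wedge4 (G ** star4 B ** G) B) *\<^sub>R mat 1"
    using star4_mult_polarization[of T B] B by (simp add: T_def S_def)
  show "0 < det G"
    using G_pos by (rule pos_def_det_pos)
qed (fact G_pos)

lemma exists_polarized_structure_making_form_11:
  assumes G: "riemannian_metric G" "rational_matrix G"
    and B: "two_form B" "rational_matrix B" "B \<noteq> 0"
  shows "\<exists>I. complex_structure I \<and> compatible G I \<and> polarizable I \<and> hodge_11 I B"
proof -
  have G_sym: "transpose G = G" and G_pos: "\<And>x. x \<noteq> 0 \<Longrightarrow> 0 < x \<bullet> (G *v x)"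
    using G(1) by (auto simp: riemannian_metric_def bil_eq_inner)
  have "invertible G"
    using pos_def_det_pos[OF G_pos] by (simp add: invertible_det_nz)
  then obtain Gi where inverse: "Gi ** G = mat 1" "G ** Gi = mat 1"
    unfolding invertible_def by blast
  define K where "K = Gi ** B"
  define L where "L = star4 B ** G"
  interpret commuting_skew_pair G K L "det G" "- wedge4 B B" "- 2 * wedge4 (G ** star4 B ** G) B"
    unfolding K_def L_def by (rule commuting_skew_pair_metric_form[OF G_sym G_pos B(1) inverse])
  have GK: "G ** K = B"
    by (simp add: K_def matrix_mul_assoc inverse(2))
  have "K \<noteq> 0"
    using B(3) GK by auto
  obtain r I where r: "r \<in> \<rat>" and I: "I ** I = - mat 1" "transpose I ** G = - (G ** I)"
    and commute: "K ** I = I ** K" "L ** I = I ** L"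
    and pos: "\<And>u. u \<noteq> 0 \<Longrightarrow> 0 < (I *v u) \<bullet> (G *v ((K + r *\<^sub>R L) *v u))"
    using polarized_complex_structure[OF \<open>K \<noteq> 0\<close>] by blast
  have invariant: "transpose I ** (G ** M) ** I = G ** M" if "M ** I = I ** M" for M
    using skew_complex_structure_congruence[OF I(2,1) that] .
  define \<psi> where "\<psi> = G ** (K + r *\<^sub>R L)"
  have "two_form \<psi>"
    by (simp add: two_form_def \<psi>_def matrix_transpose_mul transpose_add transpose_scalar G_sym
        matrix_add_rdistrib matrix_add_ldistrib matrix_scaleR_left matrix_scaleR_right K_skew L_skew)
  moreover have "rational_matrix \<psi>"
    using G(2) B(2) r by (simp add: \<psi>_def matrix_add_ldistrib matrix_scaleR_right GK L_def
        matrix_mul_assoc rational_matrix_add rational_matrix_scaleR rational_matrix_mult rational_matrix_star4)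
  moreover have "transpose I ** \<psi> ** I = \<psi>"
    unfolding \<psi>_def using commute
    by (intro invariant) (simp add: matrix_add_rdistrib matrix_add_ldistrib matrix_scaleR_left matrix_scaleR_right)
  moreover have "0 < (I *v u) \<bullet> (\<psi> *v u)" if "u \<noteq> 0" for u
    using pos[OF that] by (simp add: \<psi>_def matrix_vector_mul_assoc)
  ultimately have "polarizable I"
    by (rule polarizable_if_rational_form)
  moreover have "compatible G I"
    using invariant[of "mat 1"] by (simp add: compatible_def bil_congruence)
  moreover have "hodge_11 I B"
    using invariant[OF commute(1)] by (simp add: hodge_11_def bil_congruence GK)
  moreover have "complex_structure I"
    using I(1) by (simp add: complex_structure_def)
  ultimately show ?thesis by blast
qed

theorem proposition3p4:
  fixes G B :: mat4
  assumes "riemannian_metric G" and "two_form B"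
    and "rational_matrix G" and "rational_matrix B"
  shows "\<exists>I. complex_structure I \<and> compatible G I \<and> polarizable I \<and> hodge_11 I B"
proof (cases "B = 0")
  case False
  then show ?thesis
    using assms exists_polarized_structure_making_form_11 by blast
next
  case True
  have "skew4 1 0 0 0 0 0 \<noteq> 0"
  proof
    assume "skew4 1 0 0 0 0 0 = 0"
    then have "skew4 1 0 0 0 0 0 $ 1 $ 2 = 0" by simp
    then show False by (simp add: skew4_def)
  qed
  moreover have "rational_matrix (skew4 1 0 0 0 0 0)"
    by (simp add: rational_matrix_def skew4_def forall_4)
  ultimately obtain I where "complex_structure I" "compatible G I" "polarizable I"
    using exists_polarized_structure_making_form_11[OF assms(1,3) two_form_skew4] by blast
  moreover have "hodge_11 I B"
    by (simp add: True hodge_11_def bil_def)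
  ultimately show ?thesis by blast
qed

end
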